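(* In the graph process described in the context, for every $i\in\{1,\ldots,q\}$, $|E_H^{(i)}|\le|E_H^{(i-1)}|+1$. Consequently $|E_H^{(q)}|\le q$.
   Context: Fix integers $n\ge1$, $h\ge2$, a real $\delta\in(0,1)$ with $\delta n^{1/(h-1)}>3$, and $S=\{1,\ldots,\lfloor\delta n\rfloor\}\subseteq[n]$. Let $(a_1,b_1),\ldots,(a_q,b_q)$ be a sequence of unordered pairs of distinct points of $[n]$, no pair repeated. All graphs are unweighted undirected on vertex set $[n]$; $d_G$ is the shortest-path (edge-count) distance ($\infty$ if disconnected), $\deg_G$ the degree. Graph process: $E_G^{(0)}=\{(u,v): u,v\in[n]\setminus S, u\ne v\}$, $E_H^{(0)}=\emptyset$, $G^{(i)}=([n],E_G^{(i)})$, $H^{(i)}=([n],E_H^{(i)})$. For $i=1,\ldots,q$: if $d_{G^{(i-1)}}(a_i,b_i)\le h$, choose a shortest $a_i$-$b_i$ path $P_i$ in $G^{(i-1)}$, set $E_H^{(i)}=E_H^{(i-1)}\cup\{\text{edges of }P_i\}$ and $E_G^{(i)}=E_G^{(i-1)}\setminus\{(u,v)\in E_G^{(i-1)}\setminus E_H^{(i)}: \deg_{H^{(i)}}(u)\ge\delta n^{1/(h-1)}-2\text{ or }\deg_{H^{(i)}}(v)\ge\delta n^{1/(h-1)}-2\}$; otherwise set $E_H^{(i)}=E_H^{(i-1)}$, $E_G^{(i)}=E_G^{(i-1)}$. *)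

theory Defs
  imports Complex_Main "HOL-Library.Extended_Nat"
begin

text \<open>Undirected simple graphs on vertices of type nat, given by their edge sets;
  an (unordered) edge is a two-element set {u,v} with u \<noteq> v.\<close>

definition is_walk :: "nat set set \<Rightarrow> nat list \<Rightarrow> nat \<Rightarrow> nat \<Rightarrow> bool" where
  "is_walk E vs a b \<longleftrightarrow> vs \<noteq> [] \<and> hd vs = a \<and> last vs = b \<and>
     (\<forall>k. Suc k < length vs \<longrightarrow> {vs ! k, vs ! Suc k} \<in> E)"

text \<open>Shortest-path (edge-count) distance; \<infinity> if there is no walk.\<close>
definition gdist :: "nat set set \<Rightarrow> nat \<Rightarrow> nat \<Rightarrow> enat" where
  "gdist E a b = (INF vs \<in> {vs. is_walk E vs a b}. enat (length vs - 1))"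

definition is_shortest_path :: "nat set set \<Rightarrow> nat list \<Rightarrow> nat \<Rightarrow> nat \<Rightarrow> bool" where
  "is_shortest_path E P a b \<longleftrightarrow> is_walk E P a b \<and> enat (length P - 1) = gdist E a b"

definition path_edges :: "nat list \<Rightarrow> nat set set" where
  "path_edges P = {{P ! k, P ! Suc k} | k. Suc k < length P}"

definition gdeg :: "nat set set \<Rightarrow> nat \<Rightarrow> nat" where
  "gdeg E u = card {v. {u, v} \<in> E}"

end

theory Submission
  imports Defs
begin

text \<open>Throughout the process every edge of G outside H joins two vertices of small H-degree,
  and any two distinct vertices of small H-degree (outside S) are still adjacent in G: pruning
  only removes edges at high-degree vertices, and degrees in H only grow. Hence if a shortest
  path P in G used two edges outside H, at positions k < l, then P!k and P!(l+1) would be equal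
  or adjacent in G, and P could be shortened.\<close>

lemma is_walk_take:
  assumes "is_walk E P a b" "k < length P"
  shows "is_walk E (take (Suc k) P) a (P ! k)"
  using assms unfolding is_walk_def by (auto simp: last_conv_nth hd_conv_nth min_def le_Suc_eq)

lemma is_walk_drop:
  assumes "is_walk E P a b" "m < length P"
  shows "is_walk E (drop m P) (P ! m) b"
  using assms unfolding is_walk_def by (auto simp: hd_drop_conv_nth)

lemma is_walk_append:
  assumes xs: "is_walk E xs a c" and ys: "is_walk E ys d b" and cd: "{c, d} \<in> E"
  shows "is_walk E (xs @ ys) a b"
proof -
  have edge: "{(xs @ ys) ! t, (xs @ ys) ! Suc t} \<in> E" if t: "Suc t < length (xs @ ys)" for t
  proof (cases "Suc t < length xs")
    case True
    thus ?thesis using xs by (simp add: is_walk_def nth_append)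
  next
    case False
    show ?thesis
    proof (cases "Suc t = length xs")
      case True
      hence "xs ! t = c" "ys ! 0 = d"
        using xs ys by (auto simp: is_walk_def last_conv_nth hd_conv_nth simp flip: True)
      thus ?thesis using True cd by (simp add: nth_append)
    next
      case False
      hence "Suc (t - length xs) < length ys" "Suc t - length xs = Suc (t - length xs)"
        using \<open>\<not> Suc t < length xs\<close> t by auto
      thus ?thesis using ys False \<open>\<not> Suc t < length xs\<close> by (simp add: is_walk_def nth_append)
    qed
  qed
  thus ?thesis using xs ys by (simp add: is_walk_def)
qed

lemma is_walk_glue:
  assumes "is_walk E xs a c" "is_walk E (c # ys) c b"
  shows "is_walk E (xs @ ys) a b"
proof (cases ys)
  case Nil
  thus ?thesis using assms by (simp add: is_walk_def)
next
  case (Cons y ys')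
  have "is_walk E ys y b" "{c, y} \<in> E"
    using assms(2) Cons by (auto simp: is_walk_def)
  thus ?thesis using is_walk_append[OF assms(1)] by blast
qed

lemma shortest_path_length_le:
  assumes "is_shortest_path E P a b" "is_walk E Q a b"
  shows "length P \<le> length Q"
proof -
  have "enat (length P - 1) \<le> enat (length Q - 1)"
    using assms unfolding is_shortest_path_def gdist_def by (auto intro: INF_lower)
  moreover have "P \<noteq> []" "Q \<noteq> []" using assms by (auto simp: is_shortest_path_def is_walk_def)
  ultimately show ?thesis by (cases P; cases Q) auto
qed

lemma shortest_path_no_chord:
  assumes sp: "is_shortest_path E P a b" and km: "Suc k < m" "m < length P"
  shows "P ! k \<noteq> P ! m" "{P ! k, P ! m} \<notin> E"
proof -
  have w: "is_walk E P a b" using sp by (simp add: is_shortest_path_def)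
  have pre: "is_walk E (take (Suc k) P) a (P ! k)" using is_walk_take[OF w] km by simp
  have suf: "is_walk E (drop m P) (P ! m) b" using is_walk_drop[OF w km(2)] .
  show "P ! k \<noteq> P ! m"
  proof
    assume eq: "P ! k = P ! m"
    have "drop m P = P ! m # drop (Suc m) P" using km(2) by (simp add: Cons_nth_drop_Suc)
    hence "is_walk E (take (Suc k) P @ drop (Suc m) P) a b"
      using is_walk_glue[OF pre] suf eq by simp
    thus False using shortest_path_length_le[OF sp] km by fastforce
  qed
  show "{P ! k, P ! m} \<notin> E"
  proof
    assume "{P ! k, P ! m} \<in> E"
    hence "is_walk E (take (Suc k) P @ drop m P) a b" using is_walk_append[OF pre suf] by simp
    thus False using shortest_path_length_le[OF sp] km by fastforce
  qed
qed

lemma finite_path_edges: "finite (path_edges P)"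
proof -
  have "path_edges P = (\<lambda>k. {P ! k, P ! Suc k}) ` {..<length P - 1}"
    unfolding path_edges_def by auto
  thus ?thesis by simp
qed

lemma gdeg_mono:
  assumes "finite B" "A \<subseteq> B"
  shows "gdeg A u \<le> gdeg B u"
proof -
  have "(\<lambda>v. {u, v}) ` {v. {u, v} \<in> B} \<subseteq> B" by auto
  moreover have "inj_on (\<lambda>v. {u, v}) {v. {u, v} \<in> B}" by (auto simp: inj_on_def doubleton_eq_iff)
  ultimately have "finite {v. {u, v} \<in> B}" using assms(1) finite_subset finite_imageD by metis
  thus ?thesis unfolding gdeg_def using assms(2) by (auto intro: card_mono)
qed

definition prune :: "real \<Rightarrow> nat set set \<Rightarrow> nat set set \<Rightarrow> nat set set" where
  "prune T H G = G - {e \<in> G - H. \<exists>u v. e = {u, v} \<and>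
                        (real (gdeg H u) \<ge> T \<or> real (gdeg H v) \<ge> T)}"

definition low_degree_invariant :: "nat set \<Rightarrow> real \<Rightarrow> nat set set \<Rightarrow> nat set set \<Rightarrow> bool" where
  "low_degree_invariant V T G H \<longleftrightarrow> finite H \<and> (\<forall>e\<in>G. e \<subseteq> V) \<and>
     (\<forall>u v. {u, v} \<in> G - H \<longrightarrow> real (gdeg H u) < T) \<and>
     (\<forall>u\<in>V. \<forall>v\<in>V. u \<noteq> v \<longrightarrow> real (gdeg H u) < T \<longrightarrow> real (gdeg H v) < T \<longrightarrow> {u, v} \<in> G)"

lemma low_degree_invariant_init:
  assumes "T > 0"
  shows "low_degree_invariant V T {{u, v} | u v. u \<in> V \<and> v \<in> V \<and> u \<noteq> v} {}"
  using assms unfolding low_degree_invariant_def gdeg_def by auto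

lemma low_degree_invariant_step:
  assumes inv: "low_degree_invariant V T G H" and H': "H' = H \<union> path_edges P"
  shows "low_degree_invariant V T (prune T H' G) H'"
proof -
  have fin: "finite H'" using inv H' finite_path_edges by (simp add: low_degree_invariant_def)
  have "gdeg H u \<le> gdeg H' u" for u using gdeg_mono[OF fin] H' by simp
  hence low: "real (gdeg H u) < T" if "real (gdeg H' u) < T" for u
    using that by (meson le_less_trans of_nat_le_iff)
  have "\<forall>u v. {u, v} \<in> prune T H' G - H' \<longrightarrow> real (gdeg H' u) < T"
    unfolding prune_def by force
  moreover have "{u, v} \<in> prune T H' G"
    if "u \<in> V" "v \<in> V" "u \<noteq> v" "real (gdeg H' u) < T" "real (gdeg H' v) < T" for u v
    using that low inv by (auto simp: low_degree_invariant_def prune_def doubleton_eq_iff)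
  ultimately show ?thesis using fin inv by (auto simp: low_degree_invariant_def prune_def)
qed

lemma low_degree_invariant_one_new_edge:
  assumes inv: "low_degree_invariant V T G H" and sp: "is_shortest_path G P a b"
  shows "card (H \<union> path_edges P) \<le> card H + 1"
proof -
  have w: "is_walk G P a b" using sp by (simp add: is_shortest_path_def)
  have no_two: False
    if kl: "k < l" "Suc l < length P"
      and new: "{P ! k, P ! Suc k} \<notin> H" "{P ! l, P ! Suc l} \<notin> H" for k l
  proof -
    have "{P ! k, P ! Suc k} \<in> G - H" "{P ! Suc l, P ! l} \<in> G - H"
      using w kl new by (auto simp: is_walk_def insert_commute)
    hence "real (gdeg H (P ! k)) < T" "real (gdeg H (P ! Suc l)) < T"
          "P ! k \<in> V" "P ! Suc l \<in> V"
      using inv unfolding low_degree_invariant_def by blast+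
    moreover have "P ! k \<noteq> P ! Suc l" "{P ! k, P ! Suc l} \<notin> G"
      using shortest_path_no_chord[OF sp, of k "Suc l"] kl by auto
    ultimately show False using inv by (auto simp: low_degree_invariant_def)
  qed
  let ?X = "path_edges P - H"
  have "\<forall>x\<in>?X. \<forall>y\<in>?X. x = y"
  proof (intro ballI)
    fix x y assume "x \<in> ?X" "y \<in> ?X"
    then obtain k l where x: "x = {P ! k, P ! Suc k}" "Suc k < length P" "x \<notin> H"
      and y: "y = {P ! l, P ! Suc l}" "Suc l < length P" "y \<notin> H"
      unfolding path_edges_def by blast
    show "x = y" using no_two[of k l] no_two[of l k] x y by (cases k l rule: linorder_cases) auto
  qed
  hence "card ?X \<le> 1" using finite_path_edges by (simp add: card_le_Suc0_iff_eq)
  moreover have "H \<union> path_edges P = H \<union> ?X" by blast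
  ultimately show ?thesis using card_Un_le[of H ?X] by simp
qed

theorem mainTheorem8:
  fixes n h q :: nat and \<delta> :: real
    and a b :: "nat \<Rightarrow> nat"
    and EG EH :: "nat \<Rightarrow> nat set set"
    and S :: "nat set"
  assumes n: "n \<ge> 1" and h: "h \<ge> 2"
    and \<delta>: "0 < \<delta>" "\<delta> < 1"
    and thr: "\<delta> * real n powr (1 / (real h - 1)) > 3"
    and S_def: "S = {1..nat \<lfloor>\<delta> * real n\<rfloor>}"
    and ab_range: "\<forall>i\<in>{1..q}. a i \<in> {1..n} \<and> b i \<in> {1..n} \<and> a i \<noteq> b i"
    and ab_norep: "\<forall>i\<in>{1..q}. \<forall>j\<in>{1..q}. i \<noteq> j \<longrightarrow> {a i, b i} \<noteq> {a j, b j}"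
    and EG0: "EG 0 = {{u, v} | u v. u \<in> {1..n} - S \<and> v \<in> {1..n} - S \<and> u \<noteq> v}"
    and EH0: "EH 0 = {}"
    and step: "\<forall>i\<in>{1..q}.
      (if gdist (EG (i - 1)) (a i) (b i) \<le> enat h then
         (\<exists>P. is_shortest_path (EG (i - 1)) P (a i) (b i) \<and>
              EH i = EH (i - 1) \<union> path_edges P \<and>
              EG i = EG (i - 1) - {e \<in> EG (i - 1) - EH i. \<exists>u v. e = {u, v} \<and>
                 (real (gdeg (EH i) u) \<ge> \<delta> * real n powr (1 / (real h - 1)) - 2 \<or>
                  real (gdeg (EH i) v) \<ge> \<delta> * real n powr (1 / (real h - 1)) - 2)})
       else EH i = EH (i - 1) \<and> EG i = EG (i - 1))"
  shows "(\<forall>i\<in>{1..q}. card (EH i) \<le> card (EH (i - 1)) + 1) \<and> card (EH q) \<le> q"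
proof -
  define T where "T = \<delta> * real n powr (1 / (real h - 1)) - 2"
  have step_cases: "(\<exists>P. is_shortest_path (EG j) P (a (Suc j)) (b (Suc j)) \<and>
        EH (Suc j) = EH j \<union> path_edges P \<and> EG (Suc j) = prune T (EH (Suc j)) (EG j)) \<or>
      (EH (Suc j) = EH j \<and> EG (Suc j) = EG j)" if "j < q" for j
  proof -
    have "Suc j \<in> {1..q}" using that by simp
    from step[folded T_def prune_def, rule_format, OF this] show ?thesis
      by (cases "gdist (EG j) (a (Suc j)) (b (Suc j)) \<le> enat h") simp_all
  qed
  have inv: "low_degree_invariant ({1..n} - S) T (EG j) (EH j)" if "j \<le> q" for j
    using that
  proof (induction j)
    case 0
    have "T > 0" using thr by (simp add: T_def)
    thus ?case using low_degree_invariant_init[of T "{1..n} - S"] EG0 EH0 by simp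
  next
    case (Suc j)
    thus ?case using step_cases[of j] low_degree_invariant_step by fastforce
  qed
  have one: "card (EH (Suc j)) \<le> card (EH j) + 1" if "j < q" for j
    using step_cases[OF that] inv[of j] that low_degree_invariant_one_new_edge by fastforce
  have "card (EH j) \<le> j" if "j \<le> q" for j
    using that
  proof (induction j)
    case (Suc j)
    thus ?case using one[of j] by simp
  qed (simp add: EH0)
  moreover have "card (EH i) \<le> card (EH (i - 1)) + 1" if "i \<in> {1..q}" for i
    using one[of "i - 1"] that by auto
  ultimately show ?thesis by simp
qed

end
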